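(* For every integer $N\geq 0$ the following identities hold in $\mathcal{A}(S^5_q)$: $$\sum_{j+k+l=N}[j,k,l]!\,(z_1^jz_2^kz_3^l)(z_1^jz_2^kz_3^l)^*=1,\qquad \sum_{j+k+l=N}q^{2(j-l)}[j,k,l]!\,(z_1^jz_2^kz_3^l)^*(z_1^jz_2^kz_3^l)=q^{-2N},$$ where the sums run over all triples $(j,k,l)$ of non-negative integers with $j+k+l=N$.
   Context: Fix $0<q<1$. $\mathcal{A}(S^5_q)$ is the unital $*$-algebra generated by $z_1,z_2,z_3$ and their adjoints with relations: $z_iz_j=qz_jz_i$ for $i<j$; $z_i^*z_j=qz_jz_i^*$ for $i\neq j$; $[z_1^*,z_1]=0$; $[z_2^*,z_2]=(1-q^2)z_1z_1^*$; $[z_3^*,z_3]=(1-q^2)(z_1z_1^*+z_2z_2^* )$; $z_1z_1^*+z_2z_2^*+z_3z_3^*=1$. For $x\in\mathbb{C}$, $[x]:=\frac{q^x-q^{-x}}{q-q^{-1}}$; for $n\in\mathbb{N}$, $[n]!:=[n][n-1]\cdots[1]$, $[0]!:=1$. The $q$-trinomial coefficient is $[j,k,l]!:=q^{-(jk+kl+lj)}\frac{[j+k+l]!}{[j]![k]![l]!}$. *)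

theory Defs
  imports Complex_Main
begin

text \<open>A unital complex *-algebra, presented as a ring 'a together with a
  unital ring homomorphism iota from the complex numbers into the centre of 'a
  (this is exactly a unital associative C-algebra structure) and an involution
  star which is additive, anti-multiplicative, involutive and conjugate-linear.\<close>

definition complex_star_algebra :: "(complex \<Rightarrow> 'a::ring_1) \<Rightarrow> ('a \<Rightarrow> 'a) \<Rightarrow> bool" where
  "complex_star_algebra \<iota> st \<longleftrightarrow>
     (\<forall>a b. \<iota> (a + b) = \<iota> a + \<iota> b) \<and>
     (\<forall>a b. \<iota> (a * b) = \<iota> a * \<iota> b) \<and>
     \<iota> 1 = 1 \<and>
     (\<forall>a x. \<iota> a * x = x * \<iota> a) \<and>
     (\<forall>x y. st (x + y) = st x + st y) \<and>
     (\<forall>x y. st (x * y) = st y * st x) \<and>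
     (\<forall>x. st (st x) = x) \<and>
     (\<forall>a. st (\<iota> a) = \<iota> (cnj a))"

definition S5q_relations ::
  "real \<Rightarrow> (complex \<Rightarrow> 'a::ring_1) \<Rightarrow> ('a \<Rightarrow> 'a) \<Rightarrow> 'a \<Rightarrow> 'a \<Rightarrow> 'a \<Rightarrow> bool" where
  "S5q_relations q \<iota> st z1 z2 z3 \<longleftrightarrow>
     (let c = \<iota> (complex_of_real q); z = (\<lambda>i::nat. if i = 1 then z1 else if i = 2 then z2 else z3) in
       (\<forall>i\<in>{1,2,3}. \<forall>j\<in>{1,2,3}. i < j \<longrightarrow> z i * z j = c * (z j * z i)) \<and>
       (\<forall>i\<in>{1,2,3}. \<forall>j\<in>{1,2,3}. i \<noteq> j \<longrightarrow> st (z i) * z j = c * (z j * st (z i))) \<and>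
       st z1 * z1 - z1 * st z1 = 0 \<and>
       st z2 * z2 - z2 * st z2 = \<iota> (complex_of_real (1 - q\<^sup>2)) * (z1 * st z1) \<and>
       st z3 * z3 - z3 * st z3 = \<iota> (complex_of_real (1 - q\<^sup>2)) * (z1 * st z1 + z2 * st z2) \<and>
       z1 * st z1 + z2 * st z2 + z3 * st z3 = 1)"

definition qnum :: "real \<Rightarrow> real \<Rightarrow> real" where
  "qnum q x = (q powr x - q powr (- x)) / (q - inverse q)"

definition qfact :: "real \<Rightarrow> nat \<Rightarrow> real" where
  "qfact q n = (\<Prod>i\<in>{1..n}. qnum q (real i))"

definition qtrinom :: "real \<Rightarrow> nat \<Rightarrow> nat \<Rightarrow> nat \<Rightarrow> real" where
  "qtrinom q j k l = q powr (- real (j*k + k*l + l*j)) *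
      (qfact q (j+k+l) / (qfact q j * qfact q k * qfact q l))"

end

theory Submission
  imports Defs
begin

(* Let m = z1^j z2^k z3^l. Inserting the sphere relation z1z1^* + z2z2^* + z3z3^* = 1
   between m and m^*, and commuting each z_i into its place in the monomial, writes
   m m^* as a combination of the three products of degree N+1 with weights
   q^(-2(k+l)), q^(-2l) and 1. Reindexing the sum over j+k+l = N by the three shifts of
   an index, the identity of degree N turns into that of degree N+1 precisely because the
   q-trinomial coefficients obey the q-Pascal rule with these weights.
   The second identity is the same argument for m^* m: the relations give
   q^2 z1^*z1 + z2^*z2 + q^(-2) z3^*z3 = q^(-2), which plays the role of the sphere relation,
   and the coefficients q^(2(j-l)) [j,k,l]! satisfy the matching recursion, a mirrored
   form of the Pascal rule. *)

lemma qnum_nat: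
  assumes "0 < q" shows "qnum q (real n) = (q^n - 1/q^n) / (q - 1/q)"
  using assms by (simp add: qnum_def powr_realpow powr_minus divide_inverse)

lemma qnum_nonzero:
  assumes "0 < q" "q < 1" "0 < n" shows "qnum q (real n) \<noteq> 0"
proof -
  have "q^(n+n) < 1" using assms by (simp add: power_less_one_iff)
  hence "q^n - 1/q^n \<noteq> 0" using assms by (simp add: power_add field_simps)
  moreover have "q - 1/q \<noteq> 0"
    using assms mult_strict_mono[of q 1 q 1] by (simp add: field_simps)
  ultimately show ?thesis by (simp add: qnum_nat[OF assms(1)])
qed

text \<open>Splitting [j+k+l] into contributions of the three parts; this is the identity
  behind the q-Pascal rule.\<close>

lemma qnum_add3:
  assumes "0 < q"
  shows "qnum q (real (j+k+l))
       = qnum q (real j) / q^(k+l) + q^j * qnum q (real k) / q^l + q^(j+k) * qnum q (real l)"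
proof -
  have "q^(j+k+l) - 1/q^(j+k+l)
      = (q^j - 1/q^j) / q^(k+l) + q^j * (q^k - 1/q^k) / q^l + q^(j+k) * (q^l - 1/q^l)"
    using assms by (simp add: field_simps power_add)
  then show ?thesis
    unfolding qnum_nat[OF assms] by (simp add: add_divide_distrib mult.commute)
qed

lemma qfact_Suc: "qfact q (Suc n) = qfact q n * qnum q (real (Suc n))"
  by (simp add: qfact_def prod.nat_ivl_Suc')

lemma qfact_nonzero:
  assumes "0 < q" "q < 1" shows "qfact q n \<noteq> 0"
proof (induction n)
  case 0
  show ?case by (simp add: qfact_def)
next
  case (Suc n)
  then show ?case using qnum_nonzero[OF assms, of "Suc n"] by (simp only: qfact_Suc) simp
qed

lemma qtrinom_sym12: "qtrinom q j k l = qtrinom q k j l"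
  unfolding qtrinom_def by (simp add: algebra_simps)

lemma qtrinom_sym13: "qtrinom q j k l = qtrinom q l k j"
  unfolding qtrinom_def by (simp add: algebra_simps)

lemma qtrinom_Suc_first:
  assumes "0 < q" "q < 1"
  shows "qtrinom q (Suc j) k l * qnum q (real (Suc j)) * q^(k+l)
       = qnum q (real (Suc j+k+l)) * qtrinom q j k l"
proof -
  have pow: "q powr (- real n) = 1 / q^n" for n
    using assms by (simp add: powr_minus powr_realpow divide_inverse)
  have e: "Suc j * k + k * l + l * Suc j = (j*k + k*l + l*j) + (k+l)"
    by (simp add: algebra_simps)
  show ?thesis
    using qfact_nonzero[OF assms] qnum_nonzero[OF assms, of "Suc j"] assms
    unfolding qtrinom_def pow e
    by (simp add: qfact_Suc field_simps power_add del: of_nat_add of_nat_mult)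
qed

lemma qtrinom_lower_first:
  assumes "0 < q" "q < 1" and "j + k + l = n"
  shows "(if 0 < j then qtrinom q (j-1) k l else 0) * qnum q (real n)
       = q^(k+l) * qnum q (real j) * qtrinom q j k l"
proof (cases j)
  case 0
  then show ?thesis by (simp add: qnum_def)
next
  case (Suc j')
  with assms(3) have "n = Suc j' + k + l" by simp
  then show ?thesis using qtrinom_Suc_first[OF assms(1,2), of j' k l] Suc
    by (simp add: algebra_simps)
qed

lemma qtrinom_lower_second:
  assumes "0 < q" "q < 1" and "j + k + l = n"
  shows "(if 0 < k then qtrinom q j (k-1) l else 0) * qnum q (real n)
       = q^(j+l) * qnum q (real k) * qtrinom q j k l"
proof -
  have "k + j + l = n" using assms(3) by simp
  then have "(if 0 < k then qtrinom q (k-1) j l else 0) * qnum q (real n)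
      = q^(j+l) * qnum q (real k) * qtrinom q k j l"
    by (rule qtrinom_lower_first[OF assms(1,2)])
  then show ?thesis by (simp only: qtrinom_sym12[of q k] qtrinom_sym12[of q "k-1"])
qed

lemma qtrinom_lower_third:
  assumes "0 < q" "q < 1" and "j + k + l = n"
  shows "(if 0 < l then qtrinom q j k (l-1) else 0) * qnum q (real n)
       = q^(j+k) * qnum q (real l) * qtrinom q j k l"
proof -
  have "l + k + j = n" using assms(3) by simp
  then have "(if 0 < l then qtrinom q (l-1) k j else 0) * qnum q (real n)
      = q^(k+j) * qnum q (real l) * qtrinom q l k j"
    by (rule qtrinom_lower_first[OF assms(1,2)])
  then show ?thesis by (simp only: qtrinom_sym13[of q l] qtrinom_sym13[of q "l-1"] add.commute[of k j])
qed

lemma qtrinom_pascal: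
  assumes "0 < q" "q < 1" and "0 < j + k + l"
  shows "qtrinom q j k l =
           (if 0 < j then qtrinom q (j-1) k l else 0) / q^(2*(k+l))
         + (if 0 < k then qtrinom q j (k-1) l else 0) / q^(2*l)
         + (if 0 < l then qtrinom q j k (l-1) else 0)"
proof -
  let ?A = "if 0 < j then qtrinom q (j-1) k l else 0"
  let ?B = "if 0 < k then qtrinom q j (k-1) l else 0"
  let ?C = "if 0 < l then qtrinom q j k (l-1) else 0"
  let ?T = "qtrinom q j k l" and ?n = "qnum q (real (j+k+l))"
  have sq: "q^(2*m) = q^m * q^m" for m by (simp only: mult_2 power_add)
  have "(?A / q^(2*(k+l)) + ?B / q^(2*l) + ?C) * ?n
      = (?A * ?n) / q^(2*(k+l)) + (?B * ?n) / q^(2*l) + ?C * ?n"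
    by (simp only: distrib_right times_divide_eq_left)
  also have "\<dots> = q^(k+l) * qnum q (real j) * ?T / q^(2*(k+l))
      + q^(j+l) * qnum q (real k) * ?T / q^(2*l) + q^(j+k) * qnum q (real l) * ?T"
    by (simp only: qtrinom_lower_first[OF assms(1,2) refl] qtrinom_lower_second[OF assms(1,2) refl]
        qtrinom_lower_third[OF assms(1,2) refl])
  also have "\<dots> = ?T * (qnum q (real j) / q^(k+l) + q^j * qnum q (real k) / q^l
      + q^(j+k) * qnum q (real l))"
    using assms(1) unfolding sq by (simp add: field_simps power_add)
  also have "\<dots> = ?T * ?n"
    by (simp only: qnum_add3[OF assms(1)])
  finally have "(?A / q^(2*(k+l)) + ?B / q^(2*l) + ?C) * ?n = ?T * ?n" .
  moreover have "?n \<noteq> 0"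
    using qnum_nonzero[OF assms(1,2) assms(3)] .
  ultimately show ?thesis by simp
qed

lemma qtrinom_pascal_mirror:
  assumes "0 < q" "q < 1" and "0 < j + k + l"
  shows "qtrinom q j k l =
           (if 0 < j then qtrinom q (j-1) k l else 0)
         + (if 0 < k then qtrinom q j (k-1) l else 0) / q^(2*j)
         + (if 0 < l then qtrinom q j k (l-1) else 0) / q^(2*(j+k))"
proof -
  have "0 < l + k + j" using assms(3) by linarith
  then have "qtrinom q l k j =
           (if 0 < l then qtrinom q (l-1) k j else 0) / q^(2*(k+j))
         + (if 0 < k then qtrinom q l (k-1) j else 0) / q^(2*j)
         + (if 0 < j then qtrinom q l k (j-1) else 0)"
    by (rule qtrinom_pascal[OF assms(1,2)])
  then show ?thesis
    by (simp only: qtrinom_sym13[of q l] qtrinom_sym13[of q "l-1"] add.commute[of k j] ac_simps)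
qed

lemma qtrinom_zero: "0 < q \<Longrightarrow> qtrinom q 0 0 0 = 1"
  by (simp add: qtrinom_def qfact_def)

lemma powr_twice_diff:
  assumes "0 < q" shows "q powr (2 * (real j - real l)) = q^(2*j) / q^(2*l)"
proof -
  have "q powr (2 * (real j - real l)) = q powr (real (2*j)) / q powr (real (2*l))"
    by (simp add: powr_diff right_diff_distrib)
  then show ?thesis by (simp only: powr_realpow[OF assms])
qed

lemma qtrinom_weighted_pascal:
  assumes "0 < q" "q < 1" and "0 < j + k + l"
  defines "G \<equiv> \<lambda>j k l. q powr (2 * (real j - real l)) * qtrinom q j k l"
  shows "G j k l =
           (if 0 < j then G (j-1) k l * q^2 else 0)
         + (if 0 < k then G j (k-1) l * (1/q^(2*j)) else 0)
         + (if 0 < l then G j k (l-1) * (1/q^(2*(j+k+1))) else 0)"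
proof -
  let ?w = "q^(2*j) / q^(2*l)"
  have G: "G a b c = q^(2*a) / q^(2*c) * qtrinom q a b c" for a b c
    unfolding G_def powr_twice_diff[OF assms(1)] by simp
  have first: "(if 0 < j then G (j-1) k l * q^2 else 0)
      = ?w * (if 0 < j then qtrinom q (j-1) k l else 0)"
    using assms(1) by (cases j) (simp_all add: G field_simps power_add power2_eq_square)
  have second: "(if 0 < k then G j (k-1) l * (1/q^(2*j)) else 0)
      = ?w * ((if 0 < k then qtrinom q j (k-1) l else 0) / q^(2*j))"
    by (simp add: G)
  have third: "(if 0 < l then G j k (l-1) * (1/q^(2*(j+k+1))) else 0)
      = ?w * ((if 0 < l then qtrinom q j k (l-1) else 0) / q^(2*(j+k)))"
    using assms(1) by (cases l) (simp_all add: G field_simps power_add power2_eq_square)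
  show ?thesis
    unfolding first second third G[of j k l] qtrinom_pascal_mirror[OF assms(1-3)]
    by (simp only: distrib_left)
qed

lemma inverse_power_square: "(1/(q::real)^m)^2 = 1/q^(2*m)"
  by (simp add: power_one_over power_mult[symmetric] mult.commute)

definition triples :: "nat \<Rightarrow> (nat \<times> nat \<times> nat) set" where
  "triples N = {(j,k,l). j + k + l = N}"

lemma finite_triples: "finite (triples N)"
proof (rule finite_subset)
  show "triples N \<subseteq> {..N} \<times> {..N} \<times> {..N}" by (auto simp: triples_def)
qed simp

lemma triples_0: "triples 0 = {(0,0,0)}"
  by (auto simp: triples_def)

lemma sum_triples_shift_first:
  "(\<Sum>(j,k,l)\<in>triples N. g (Suc j) k l)
   = (\<Sum>(j,k,l)\<in>triples (Suc N). if 0 < j then g j k l else (0::'b::comm_monoid_add))"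
  by (rule sum.reindex_bij_witness_not_neutral[where S'="{}" and T'="{p\<in>triples (Suc N). fst p = 0}"
        and j="\<lambda>(j,k,l). (Suc j,k,l)" and i="\<lambda>(j,k,l). (j-1,k,l)"])
     (auto simp: triples_def finite_triples[unfolded triples_def])

lemma sum_triples_shift_second:
  "(\<Sum>(j,k,l)\<in>triples N. g j (Suc k) l)
   = (\<Sum>(j,k,l)\<in>triples (Suc N). if 0 < k then g j k l else (0::'b::comm_monoid_add))"
  by (rule sum.reindex_bij_witness_not_neutral[where S'="{}" and T'="{p\<in>triples (Suc N). fst (snd p) = 0}"
        and j="\<lambda>(j,k,l). (j,Suc k,l)" and i="\<lambda>(j,k,l). (j,k-1,l)"])
     (auto simp: triples_def finite_triples[unfolded triples_def])

lemma sum_triples_shift_third: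
  "(\<Sum>(j,k,l)\<in>triples N. g j k (Suc l))
   = (\<Sum>(j,k,l)\<in>triples (Suc N). if 0 < l then g j k l else (0::'b::comm_monoid_add))"
  by (rule sum.reindex_bij_witness_not_neutral[where S'="{}" and T'="{p\<in>triples (Suc N). snd (snd p) = 0}"
        and j="\<lambda>(j,k,l). (j,k,Suc l)" and i="\<lambda>(j,k,l). (j,k,l-1)"])
     (auto simp: triples_def finite_triples[unfolded triples_def])

locale S5q_algebra =
  fixes q :: real and \<iota> :: "complex \<Rightarrow> 'a::ring_1" and st :: "'a \<Rightarrow> 'a"
    and z1 z2 z3 :: 'a
  assumes q_pos: "0 < q" and q_less_1: "q < 1"
    and star_algebra: "complex_star_algebra \<iota> st"
    and relations: "S5q_relations q \<iota> st z1 z2 z3"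
begin

definition scal :: "real \<Rightarrow> 'a" where
  "scal x = \<iota> (complex_of_real x)"

lemma star_algebra_laws:
  "\<iota> (a + b) = \<iota> a + \<iota> b" "\<iota> (a * b) = \<iota> a * \<iota> b" "\<iota> 1 = 1"
  "\<iota> a * x = x * \<iota> a" "st (x * y) = st y * st x" "st (\<iota> a) = \<iota> (cnj a)"
  using star_algebra unfolding complex_star_algebra_def by blast+

lemma scal_add: "scal (x + y) = scal x + scal y"
  by (simp only: scal_def of_real_add star_algebra_laws(1))

lemma scal_mult: "scal (x * y) = scal x * scal y"
  by (simp only: scal_def of_real_mult star_algebra_laws(2))

lemma scal_one: "scal 1 = 1"
  by (simp only: scal_def of_real_1 star_algebra_laws(3))

lemma scal_zero: "scal 0 = 0"
  using scal_add[of 0 0] by simp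

lemma scal_central: "scal x * y = y * scal x"
  unfolding scal_def by (rule star_algebra_laws(4))

lemma scal_left_commute: "y * (scal x * w) = scal x * (y * w)"
  by (metis mult.assoc scal_central)

lemma scal_scal: "scal x * (scal y * w) = scal (x * y) * w"
  by (simp only: scal_mult mult.assoc)

lemma st_mult: "st (x * y) = st y * st x"
  by (rule star_algebra_laws(5))

lemma st_scal: "st (scal x) = scal x"
  by (simp only: scal_def star_algebra_laws(6) complex_cnj_complex_of_real)

lemma st_one: "st 1 = 1"
  using st_scal[of 1] by (simp add: scal_one)

lemma norm_left_scaled: "(scal s * y) * st (scal s * y) = scal (s^2) * (y * st y)"
proof -
  have "(scal s * y) * st (scal s * y) = scal s * (y * (st y * scal s))"
    by (simp only: st_mult st_scal mult.assoc)
  also have "\<dots> = scal (s^2) * (y * st y)"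
    by (simp only: scal_central[of s "st y", symmetric] scal_left_commute[of y] scal_scal
        power2_eq_square)
  finally show ?thesis .
qed

lemma norm_right_scaled: "st (scal s * y) * (scal s * y) = scal (s^2) * (st y * y)"
  by (simp only: st_mult st_scal mult.assoc scal_scal scal_left_commute[of "st y"] power2_eq_square)

lemmas relations_scal = relations[unfolded S5q_relations_def Let_def, folded scal_def]

lemma z1_z2: "z1 * z2 = scal q * (z2 * z1)" using relations_scal by simp
lemma z1_z3: "z1 * z3 = scal q * (z3 * z1)" using relations_scal by simp
lemma z2_z3: "z2 * z3 = scal q * (z3 * z2)" using relations_scal by simp
lemma sphere: "z1 * st z1 + z2 * st z2 + z3 * st z3 = 1" using relations_scal by simp
lemma normal_z1: "st z1 * z1 = z1 * st z1" using relations_scal by simp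
lemma commutator_z2: "st z2 * z2 = z2 * st z2 + scal (1 - q^2) * (z1 * st z1)"
  using relations_scal by (simp add: algebra_simps)
lemma commutator_z3: "st z3 * z3 = z3 * st z3 + scal (1 - q^2) * (z1 * st z1 + z2 * st z2)"
  using relations_scal by (simp add: algebra_simps)

lemma q_commute_reverse:
  assumes "x * y = scal q * (y * x)" shows "y * x = scal (1/q) * (x * y)"
proof -
  have "scal (1/q) * (x * y) = scal (1/q * q) * (y * x)" by (simp only: assms scal_scal)
  then show ?thesis using q_pos by (simp add: scal_one)
qed

lemma z2_z1: "z2 * z1 = scal (1/q) * (z1 * z2)" by (rule q_commute_reverse[OF z1_z2])
lemma z3_z1: "z3 * z1 = scal (1/q) * (z1 * z3)" by (rule q_commute_reverse[OF z1_z3])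
lemma z3_z2: "z3 * z2 = scal (1/q) * (z2 * z3)" by (rule q_commute_reverse[OF z2_z3])

lemma commute_past_power_right:
  assumes "y * x = scal c * (x * y)" shows "y * x^n = scal (c^n) * (x^n * y)"
proof (induction n)
  case 0
  show ?case by (simp add: scal_one)
next
  case (Suc n)
  have "y * x^Suc n = (y * x^n) * x" by (simp only: power_Suc2 mult.assoc)
  also have "\<dots> = scal (c^n) * (x^n * (scal c * (x * y)))" by (simp only: Suc assms mult.assoc)
  also have "\<dots> = scal (c^Suc n) * (x^Suc n * y)"
    by (simp only: scal_left_commute[of "x^n"] scal_scal power_Suc2 mult.assoc)
  finally show ?case .
qed

lemma commute_past_power_left:
  assumes "y * x = scal c * (x * y)" shows "y^n * x = scal (c^n) * (x * y^n)"
proof (induction n)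
  case 0
  show ?case by (simp add: scal_one)
next
  case (Suc n)
  have "y^Suc n * x = y * (y^n * x)" by (simp only: power_Suc mult.assoc)
  also have "\<dots> = scal (c^n) * ((y * x) * y^n)" by (simp only: Suc scal_left_commute[of y] mult.assoc)
  also have "\<dots> = scal (c^Suc n) * (x * y^Suc n)"
    by (simp only: assms scal_scal power_Suc2 power_commutes mult.assoc)
  finally show ?case .
qed

definition mon :: "nat \<Rightarrow> nat \<Rightarrow> nat \<Rightarrow> 'a" where
  "mon j k l = z1^j * z2^k * z3^l"

lemma mon_z3: "mon j k l * z3 = mon j k (Suc l)"
  by (simp only: mon_def mult.assoc power_Suc2)

lemma mon_z2: "mon j k l * z2 = scal (1/q^l) * mon j (Suc k) l"
proof -
  have "mon j k l * z2 = z1^j * (z2^k * (z3^l * z2))" by (simp only: mon_def mult.assoc)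
  also have "\<dots> = scal (1/q^l) * mon j (Suc k) l"
    by (simp only: commute_past_power_left[OF z3_z2] power_one_over scal_left_commute[of "z2^k"]
        scal_left_commute[of "z1^j"] mon_def power_Suc2 mult.assoc)
  finally show ?thesis .
qed

lemma mon_z1: "mon j k l * z1 = scal (1/q^(k+l)) * mon (Suc j) k l"
proof -
  have "mon j k l * z1 = z1^j * (z2^k * (z3^l * z1))" by (simp only: mon_def mult.assoc)
  also have "\<dots> = scal (1/q^l) * (z1^j * ((z2^k * z1) * z3^l))"
    by (simp only: commute_past_power_left[OF z3_z1] power_one_over scal_left_commute[of "z2^k"]
        scal_left_commute[of "z1^j"] mult.assoc)
  also have "\<dots> = scal (1/q^l) * (scal (1/q^k) * mon (Suc j) k l)"
    by (simp only: commute_past_power_left[OF z2_z1] power_one_over scal_left_commute[of "z1^j"]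
        mon_def power_Suc2 mult.assoc)
  also have "\<dots> = scal (1/q^(k+l)) * mon (Suc j) k l"
    by (simp add: scal_scal power_add mult.commute)
  finally show ?thesis .
qed

lemma z1_mon: "z1 * mon j k l = mon (Suc j) k l"
  by (simp only: mon_def mult.assoc power_Suc)

lemma z2_mon: "z2 * mon j k l = scal (1/q^j) * mon j (Suc k) l"
proof -
  have "z2 * mon j k l = (z2 * z1^j) * (z2^k * z3^l)" by (simp only: mon_def mult.assoc)
  also have "\<dots> = scal (1/q^j) * mon j (Suc k) l"
    by (simp only: commute_past_power_right[OF z2_z1] power_one_over mon_def power_Suc mult.assoc)
  finally show ?thesis .
qed

lemma z3_mon: "z3 * mon j k l = scal (1/q^(j+k)) * mon j k (Suc l)"
proof -
  have "z3 * mon j k l = (z3 * z1^j) * (z2^k * z3^l)" by (simp only: mon_def mult.assoc)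
  also have "\<dots> = scal (1/q^j) * (z1^j * ((z3 * z2^k) * z3^l))"
    by (simp only: commute_past_power_right[OF z3_z1] power_one_over mult.assoc)
  also have "\<dots> = scal (1/q^j) * (scal (1/q^k) * mon j k (Suc l))"
    by (simp only: commute_past_power_right[OF z3_z2] power_one_over scal_left_commute[of "z1^j"]
        mon_def power_Suc mult.assoc)
  also have "\<dots> = scal (1/q^(j+k)) * mon j k (Suc l)"
    by (simp add: scal_scal power_add)
  finally show ?thesis .
qed

definition left_norm :: "nat \<Rightarrow> nat \<Rightarrow> nat \<Rightarrow> 'a" where
  "left_norm j k l = mon j k l * st (mon j k l)"

definition right_norm :: "nat \<Rightarrow> nat \<Rightarrow> nat \<Rightarrow> 'a" where
  "right_norm j k l = st (mon j k l) * mon j k l"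

text \<open>Inserting the sphere relation 1 = sum z_i z_i^* between m and m^* expresses
  m m^* through the three monomials of one degree higher.\<close>

lemma left_norm_expand:
  "left_norm j k l = scal (1/q^(2*(k+l))) * left_norm (Suc j) k l
     + scal (1/q^(2*l)) * left_norm j (Suc k) l + left_norm j k (Suc l)"
proof -
  let ?m = "mon j k l"
  have "left_norm j k l = ?m * (z1 * st z1 + z2 * st z2 + z3 * st z3) * st ?m"
    by (simp only: sphere mult_1_right left_norm_def)
  also have "\<dots> = (?m * z1) * st (?m * z1) + (?m * z2) * st (?m * z2) + (?m * z3) * st (?m * z3)"
    by (simp only: distrib_left distrib_right st_mult mult.assoc)
  also have "\<dots> = scal ((1/q^(k+l))^2) * left_norm (Suc j) k l
      + scal ((1/q^l)^2) * left_norm j (Suc k) l + left_norm j k (Suc l)"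
    by (simp only: mon_z1 mon_z2 mon_z3 norm_left_scaled left_norm_def)
  finally show ?thesis by (simp only: inverse_power_square)
qed

text \<open>The relations imply that a weighted sum of the z_i^* z_i is a scalar;
  it plays for the second identity the role the sphere relation plays for the first.\<close>

lemma weighted_sphere:
  "scal (q^2) * (st z1 * z1) + st z2 * z2 + scal (1/q^2) * (st z3 * z3) = scal (1/q^2)"
proof -
  let ?a = "z1 * st z1" and ?b = "z2 * st z2" and ?c = "z3 * st z3" and ?s = "1/q^2"
  have coeff_a: "q^2 + (1 - q^2) + ?s * (1 - q^2) = ?s" and coeff_b: "1 + ?s * (1 - q^2) = ?s"
    using q_pos by (simp_all add: field_simps)
  have "scal (q^2) * (st z1 * z1) + st z2 * z2 + scal ?s * (st z3 * z3)
      = scal (q^2) * ?a + (?b + scal (1 - q^2) * ?a) + scal ?s * (?c + scal (1 - q^2) * (?a + ?b))"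
    by (simp only: normal_z1 commutator_z2 commutator_z3)
  also have "\<dots> = (scal (q^2) * ?a + scal (1 - q^2) * ?a + scal (?s * (1 - q^2)) * ?a)
      + (scal 1 * ?b + scal (?s * (1 - q^2)) * ?b) + scal ?s * ?c"
    by (simp only: distrib_left scal_scal scal_one mult_1_left add_ac)
  also have "\<dots> = scal ?s * ?a + scal ?s * ?b + scal ?s * ?c"
    by (simp only: distrib_right[symmetric] scal_add[symmetric] coeff_a coeff_b)
  also have "\<dots> = scal ?s"
    by (simp only: distrib_left[symmetric] sphere mult_1_right)
  finally show ?thesis .
qed

lemma right_norm_expand:
  "scal (1/q^2) * right_norm j k l = scal (q^2) * right_norm (Suc j) k l
     + scal (1/q^(2*j)) * right_norm j (Suc k) l + scal (1/q^(2*(j+k+1))) * right_norm j k (Suc l)"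
proof -
  let ?m = "mon j k l"
  have "scal (1/q^2) * right_norm j k l = st ?m * scal (1/q^2) * ?m"
    by (simp only: right_norm_def scal_left_commute[of "st ?m"] mult.assoc)
  also have "\<dots> = st ?m * (scal (q^2) * (st z1 * z1) + st z2 * z2 + scal (1/q^2) * (st z3 * z3)) * ?m"
    by (simp only: weighted_sphere)
  also have "\<dots> = scal (q^2) * (st (z1 * ?m) * (z1 * ?m)) + st (z2 * ?m) * (z2 * ?m)
      + scal (1/q^2) * (st (z3 * ?m) * (z3 * ?m))"
    by (simp only: distrib_left distrib_right st_mult scal_left_commute[of "st ?m"] mult.assoc)
  also have "\<dots> = scal (q^2) * right_norm (Suc j) k l + scal ((1/q^j)^2) * right_norm j (Suc k) l
      + scal (1/q^2) * (scal ((1/q^(j+k))^2) * right_norm j k (Suc l))"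
    by (simp only: z1_mon z2_mon z3_mon norm_right_scaled right_norm_def)
  also have "\<dots> = scal (q^2) * right_norm (Suc j) k l + scal (1/q^(2*j)) * right_norm j (Suc k) l
      + scal (1/q^(2*(j+k+1))) * right_norm j k (Suc l)"
  proof -
    have "q^(2*(j+k+1)) = q^2 * q^(2*(j+k))" by (simp add: distrib_left power_add power2_eq_square)
    then have "1/q^2 * (1/q^(j+k))^2 = 1/q^(2*(j+k+1))" by (simp only: inverse_power_square) simp
    then show ?thesis by (simp only: scal_scal inverse_power_square)
  qed
  finally show ?thesis .
qed

lemma weighted_sum_step:
  fixes c a b d :: "nat \<Rightarrow> nat \<Rightarrow> nat \<Rightarrow> real" and E :: "nat \<Rightarrow> nat \<Rightarrow> nat \<Rightarrow> 'a"
  assumes expand: "\<And>j k l. scal s * E j k l = scal (a j k l) * E (Suc j) k l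
      + scal (b j k l) * E j (Suc k) l + scal (d j k l) * E j k (Suc l)"
    and recursion: "\<And>j k l. j + k + l = Suc N \<Longrightarrow> c j k l =
        (if 0 < j then c (j-1) k l * a (j-1) k l else 0)
      + (if 0 < k then c j (k-1) l * b j (k-1) l else 0)
      + (if 0 < l then c j k (l-1) * d j k (l-1) else 0)"
  shows "scal s * (\<Sum>(j,k,l)\<in>triples N. scal (c j k l) * E j k l)
       = (\<Sum>(j,k,l)\<in>triples (Suc N). scal (c j k l) * E j k l)"
proof -
  have pointwise: "scal s * (scal (c j k l) * E j k l) = scal (c j k l * a j k l) * E (Suc j) k l
      + scal (c j k l * b j k l) * E j (Suc k) l + scal (c j k l * d j k l) * E j k (Suc l)" for j k l
  proof -
    have "scal s * (scal (c j k l) * E j k l) = scal (c j k l) * (scal s * E j k l)"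
      by (rule scal_left_commute)
    then show ?thesis by (simp only: expand distrib_left scal_scal)
  qed
  have "scal s * (\<Sum>(j,k,l)\<in>triples N. scal (c j k l) * E j k l)
      = (\<Sum>(j,k,l)\<in>triples N. scal (c j k l * a j k l) * E (Suc j) k l
          + scal (c j k l * b j k l) * E j (Suc k) l + scal (c j k l * d j k l) * E j k (Suc l))"
    by (simp only: sum_distrib_left case_prod_unfold pointwise)
  also have "\<dots> = (\<Sum>(j,k,l)\<in>triples N. scal (c j k l * a j k l) * E (Suc j) k l)
      + (\<Sum>(j,k,l)\<in>triples N. scal (c j k l * b j k l) * E j (Suc k) l)
      + (\<Sum>(j,k,l)\<in>triples N. scal (c j k l * d j k l) * E j k (Suc l))"
    by (simp only: case_prod_unfold sum.distrib)
  also have "\<dots> = (\<Sum>(j,k,l)\<in>triples (Suc N).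
          (if 0 < j then scal (c (j-1) k l * a (j-1) k l) * E j k l else 0)
        + (if 0 < k then scal (c j (k-1) l * b j (k-1) l) * E j k l else 0)
        + (if 0 < l then scal (c j k (l-1) * d j k (l-1)) * E j k l else 0))"
    using sum_triples_shift_first[of "\<lambda>j k l. scal (c (j-1) k l * a (j-1) k l) * E j k l" N]
      sum_triples_shift_second[of "\<lambda>j k l. scal (c j (k-1) l * b j (k-1) l) * E j k l" N]
      sum_triples_shift_third[of "\<lambda>j k l. scal (c j k (l-1) * d j k (l-1)) * E j k l" N]
    by (simp only: diff_Suc_1 case_prod_unfold sum.distrib)
  also have "\<dots> = (\<Sum>(j,k,l)\<in>triples (Suc N). scal (c j k l) * E j k l)"
  proof (rule sum.cong[OF refl], clarify)
    fix j k l assume "(j, k, l) \<in> triples (Suc N)"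
    then have "j + k + l = Suc N" by (simp add: triples_def)
    then show "(if 0 < j then scal (c (j-1) k l * a (j-1) k l) * E j k l else 0)
        + (if 0 < k then scal (c j (k-1) l * b j (k-1) l) * E j k l else 0)
        + (if 0 < l then scal (c j k (l-1) * d j k (l-1)) * E j k l else 0)
        = scal (c j k l) * E j k l"
      by (simp only: recursion scal_add distrib_right if_distrib[of scal]
          if_distrib[of "\<lambda>x. x * E j k l"] scal_zero mult_zero_left)
  qed
  finally show ?thesis .
qed

theorem left_identity:
  "(\<Sum>(j,k,l)\<in>triples N. scal (qtrinom q j k l) * left_norm j k l) = 1"
proof (induction N)
  case 0
  show ?case
    by (simp add: triples_0 qtrinom_zero[OF q_pos] scal_one left_norm_def mon_def st_one)
next
  case (Suc N)
  have "scal 1 * (\<Sum>(j,k,l)\<in>triples N. scal (qtrinom q j k l) * left_norm j k l)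
      = (\<Sum>(j,k,l)\<in>triples (Suc N). scal (qtrinom q j k l) * left_norm j k l)"
  proof (rule weighted_sum_step[where a="\<lambda>j k l. 1/q^(2*(k+l))" and b="\<lambda>j k l. 1/q^(2*l)"
        and d="\<lambda>j k l. 1"])
    show "scal 1 * left_norm j k l = scal (1/q^(2*(k+l))) * left_norm (Suc j) k l
        + scal (1/q^(2*l)) * left_norm j (Suc k) l + scal 1 * left_norm j k (Suc l)" for j k l
      using left_norm_expand[of j k l] by (simp only: scal_one mult_1_left)
    show "qtrinom q j k l =
        (if 0 < j then qtrinom q (j-1) k l * (1/q^(2*(k+l))) else 0)
      + (if 0 < k then qtrinom q j (k-1) l * (1/q^(2*l)) else 0)
      + (if 0 < l then qtrinom q j k (l-1) * 1 else 0)" if "j + k + l = Suc N" for j k l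
      using qtrinom_pascal[OF q_pos q_less_1, of j k l] that by simp
  qed
  with Suc show ?case by (simp add: scal_one)
qed

theorem right_identity:
  "(\<Sum>(j,k,l)\<in>triples N. scal (q powr (2 * (real j - real l)) * qtrinom q j k l) * right_norm j k l)
   = scal (q powr (- 2 * real N))"
proof (induction N)
  case 0
  show ?case
    by (simp add: triples_0 qtrinom_zero[OF q_pos] scal_one right_norm_def mon_def st_one)
next
  case (Suc N)
  have step: "scal (1/q^2) * (\<Sum>(j,k,l)\<in>triples N.
          scal (q powr (2 * (real j - real l)) * qtrinom q j k l) * right_norm j k l)
      = (\<Sum>(j,k,l)\<in>triples (Suc N).
          scal (q powr (2 * (real j - real l)) * qtrinom q j k l) * right_norm j k l)"
  proof (rule weighted_sum_step[where a="\<lambda>j k l. q^2" and b="\<lambda>j k l. 1/q^(2*j)"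
        and d="\<lambda>j k l. 1/q^(2*(j+k+1))"])
    show "scal (1/q^2) * right_norm j k l = scal (q^2) * right_norm (Suc j) k l
        + scal (1/q^(2*j)) * right_norm j (Suc k) l + scal (1/q^(2*(j+k+1))) * right_norm j k (Suc l)"
      for j k l
      by (rule right_norm_expand)
    show "q powr (2 * (real j - real l)) * qtrinom q j k l =
        (if 0 < j then q powr (2 * (real (j-1) - real l)) * qtrinom q (j-1) k l * q^2 else 0)
      + (if 0 < k then q powr (2 * (real j - real l)) * qtrinom q j (k-1) l * (1/q^(2*j)) else 0)
      + (if 0 < l then q powr (2 * (real j - real (l-1))) * qtrinom q j k (l-1) * (1/q^(2*(j+k+1)))
         else 0)"
      if "j + k + l = Suc N" for j k l
      using qtrinom_weighted_pascal[OF q_pos q_less_1, of j k l] that by simp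
  qed
  have power_step: "1/q^2 * q powr (- 2 * real N) = q powr (- 2 * real (Suc N))"
  proof -
    have "q powr (- 2) = 1/q^2" using q_pos by (simp add: powr_minus powr_numeral divide_inverse)
    moreover have "- 2 * real (Suc N) = - 2 + - 2 * real N" by simp
    ultimately show ?thesis by (simp only: powr_add)
  qed
  show ?case
    by (simp only: step[symmetric] Suc.IH scal_mult[symmetric] power_step)
qed

end

theorem mainTheorem1:
  fixes q :: real and \<iota> :: "complex \<Rightarrow> 'a::ring_1" and st :: "'a \<Rightarrow> 'a"
    and z1 z2 z3 :: 'a and N :: nat
  assumes "0 < q" and "q < 1"
    and "complex_star_algebra \<iota> st"
    and "S5q_relations q \<iota> st z1 z2 z3"
  shows "(\<Sum>(j,k,l)\<in>{(j,k,l). j + k + l = N}.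
            \<iota> (complex_of_real (qtrinom q j k l)) *
            ((z1^j * z2^k * z3^l) * st (z1^j * z2^k * z3^l))) = 1 \<and>
         (\<Sum>(j,k,l)\<in>{(j,k,l). j + k + l = N}.
            \<iota> (complex_of_real (q powr (2 * (real j - real l)) * qtrinom q j k l)) *
            (st (z1^j * z2^k * z3^l) * (z1^j * z2^k * z3^l)))
         = \<iota> (complex_of_real (q powr (- 2 * real N)))"
proof -
  interpret S5q_algebra q \<iota> st z1 z2 z3
    using assms by unfold_locales
  show ?thesis
    using left_identity[of N] right_identity[of N]
    unfolding triples_def scal_def left_norm_def right_norm_def mon_def by simp
qed

end
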